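(* Let $c>1$ be an irrational number, and for a positive integer $m$ let $x=[cm]$. Then, as $m\to\infty$, $$\int_1^x \frac{[c^{-1}([t]+1)]}{t^2}\,dt = \frac{1}{c}(\log m + \log c + \gamma) -\sum_{n=1}^\infty \frac{\{c^{-1}(n+1)\}}{n(n+1)} + O\left(\frac{1}{m}\right),$$ where $\gamma$ is Euler's constant.
   Context: $[x]$ is the greatest integer not exceeding $x$ and $\{x\}=x-[x]$. *)

theory Defs
  imports "HOL-Analysis.Analysis" "HOL-Library.Landau_Symbols"
begin

end

theory Submission imports Defs begin

text \<open>On \<open>[k, k+1)\<close> the integrand is \<open>a k / t\<^sup>2\<close> with \<open>a k = [(k+1)/c]\<close>, so the integral up to
  \<open>x = [cm]\<close> is the partial sum of \<open>a k / (k (k+1))\<close> over \<open>k < x\<close>. Writing \<open>a k = (k+1)/c - {(k+1)/c}\<close>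
  turns it into \<open>H (x-1) / c\<close> minus a partial sum of the series, whose tail is at most \<open>1/x\<close>.
  Since \<open>H (x-1) = log x + \<gamma> + O(1/x)\<close> and \<open>log x = log (cm) + O(1/m)\<close>, the claim follows.\<close>

lemma has_integral_floor_step_div_square:
  fixes g :: "int \<Rightarrow> real" and k :: nat
  assumes "k > 0"
  shows "((\<lambda>t. g \<lfloor>t\<rfloor> / t\<^sup>2) has_integral g (int k) / (real k * (real k + 1))) {real k .. real k + 1}"
proof -
  have "((\<lambda>t. g (int k) / t\<^sup>2) has_integral
          (- g (int k) / (real k + 1)) - (- g (int k) / real k)) {real k .. real k + 1}"
  proof (rule fundamental_theorem_of_calculus)
    fix x assume "x \<in> {real k .. real k + 1}"
    then have "x > 0" using assms by auto
    then show "((\<lambda>t. - g (int k) / t) has_vector_derivative g (int k) / x\<^sup>2)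
                 (at x within {real k .. real k + 1})"
      by (auto intro!: derivative_eq_intros
          simp: has_real_derivative_iff_has_vector_derivative[symmetric] power2_eq_square field_simps)
  qed simp
  moreover have "(- g (int k) / (real k + 1)) - (- g (int k) / real k) = g (int k) / (real k * (real k + 1))"
    using assms by (simp add: field_simps)
  ultimately have on_step: "((\<lambda>t. g (int k) / t\<^sup>2) has_integral g (int k) / (real k * (real k + 1)))
                              {real k .. real k + 1}"
    by simp
  have "g \<lfloor>t\<rfloor> / t\<^sup>2 = g (int k) / t\<^sup>2" if "t \<in> {real k .. real k + 1} - {real k + 1}" for t
  proof -
    have "\<lfloor>t\<rfloor> = int k"
      using that by (subst floor_eq_iff) auto
    then show ?thesis by simp
  qed
  then show ?thesis
    by (intro has_integral_spike_finite[of "{real k + 1}", OF _ _ on_step]) auto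
qed

lemma has_integral_floor_step_div_square_sum:
  fixes g :: "int \<Rightarrow> real"
  shows "((\<lambda>t. g \<lfloor>t\<rfloor> / t\<^sup>2) has_integral
           (\<Sum>n<N. g (int (Suc n)) / (real (Suc n) * (real (Suc n) + 1)))) {1 .. real (Suc N)}"
proof (induction N)
  case 0
  show ?case using has_integral_refl(1)[of _ "1::real"] by simp
next
  case (Suc N)
  show ?case
    using has_integral_combine[OF _ _ Suc.IH has_integral_floor_step_div_square[of "Suc N" g]]
    by (simp add: add.commute)
qed

lemma inverse_consecutive_product_tail_sums:
  "(\<lambda>n. 1 / (real (Suc (n + K)) * (real (Suc (n + K)) + 1))) sums (1 / real (Suc K))"
proof -
  have "(\<lambda>n. 1 / real (n + Suc K)) \<longlonglongrightarrow> 0"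
    using LIMSEQ_ignore_initial_segment[OF lim_inverse_n', of "Suc K"] by simp
  from telescope_sums'[OF this] show ?thesis
    by (simp add: field_simps)
qed

lemma
  fixes w :: "nat \<Rightarrow> real"
  assumes w_nonneg: "\<And>n. 0 \<le> w n" and w_le_1: "\<And>n. w n \<le> 1"
  defines "b \<equiv> \<lambda>n. w n / (real (Suc n) * (real (Suc n) + 1))"
  shows summable_bounded_div_consecutive_product: "summable b"
    and suminf_bounded_div_consecutive_product_tail_nonneg: "0 \<le> (\<Sum>n. b (n + K))"
    and suminf_bounded_div_consecutive_product_tail_le: "(\<Sum>n. b (n + K)) \<le> 1 / real (Suc K)"
proof -
  have b_bounds: "0 \<le> b n \<and> b n \<le> 1 / (real (Suc n) * (real (Suc n) + 1))" for n
    unfolding b_def using w_nonneg w_le_1 by (auto intro!: divide_right_mono)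
  show "summable b"
    using inverse_consecutive_product_tail_sums[of 0] b_bounds
    by (intro summable_comparison_test'[OF sums_summable, of _ _ 0]) auto
  then have "summable (\<lambda>n. b (n + K))"
    by (simp add: summable_iff_shift)
  then show "0 \<le> (\<Sum>n. b (n + K))"
    using b_bounds by (intro suminf_nonneg) auto
  have "(\<Sum>n. b (n + K)) \<le> (\<Sum>n. 1 / (real (Suc (n + K)) * (real (Suc (n + K)) + 1)))"
    using b_bounds
    by (intro suminf_le \<open>summable (\<lambda>n. b (n + K))\<close>
        sums_summable[OF inverse_consecutive_product_tail_sums[of K]]) blast
  then show "(\<Sum>n. b (n + K)) \<le> 1 / real (Suc K)"
    using sums_unique[OF inverse_consecutive_product_tail_sums[of K]] by simp
qed

lemma abs_harm_minus_ln_minus_euler_mascheroni_le: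
  assumes "N \<ge> 1"
  shows "\<bar>harm N - ln (real (Suc N)) - euler_mascheroni\<bar> \<le> 1 / (2 * real N)"
proof -
  have "harm N - ln (real (Suc N)) + inverse (real (2 * (N + 1))) \<le> euler_mascheroni"
    and "euler_mascheroni \<le> harm N - ln (real (Suc N)) + inverse (real (2 * N))"
    using euler_mascheroni_bounds[OF assms] by simp_all
  moreover have "0 \<le> inverse (real (2 * (N + 1)))" and "inverse (real (2 * N)) = 1 / (2 * real N)"
    by (simp_all add: inverse_eq_divide)
  ultimately show ?thesis
    by (simp only: abs_le_iff) linarith
qed

lemma floor_ratio_div_consecutive_product:
  fixes c :: real and k :: nat
  assumes "c \<noteq> 0" and "k > 0"
  shows "real_of_int \<lfloor>(real k + 1) / c\<rfloor> / (real k * (real k + 1))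
           = inverse (real k) / c - frac ((real k + 1) / c) / (real k * (real k + 1))"
proof -
  have "real_of_int \<lfloor>(real k + 1) / c\<rfloor> / (real k * (real k + 1))
          = ((real k + 1) / c - frac ((real k + 1) / c)) / (real k * (real k + 1))"
    by (simp add: frac_def)
  also have "\<dots> = ((real k + 1) / c) / (real k * (real k + 1)) - frac ((real k + 1) / c) / (real k * (real k + 1))"
    by (rule diff_divide_distrib)
  also have "((real k + 1) / c) / (real k * (real k + 1)) = inverse (real k) / c"
  proof -
    have "real k \<noteq> 0" and "real k + 1 \<noteq> 0"
      using assms by simp_all
    then show ?thesis
      by (simp add: divide_divide_eq_left inverse_eq_divide)
  qed
  finally show ?thesis .
qed

lemma integral_floor_ratio_div_square:
  fixes c :: real
  assumes "c \<noteq> 0"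
  shows "integral {1 .. real (Suc N)} (\<lambda>t. real_of_int \<lfloor>(real_of_int \<lfloor>t\<rfloor> + 1) / c\<rfloor> / t\<^sup>2)
           = harm N / c - (\<Sum>n<N. frac ((real (Suc n) + 1) / c) / (real (Suc n) * (real (Suc n) + 1)))"
proof -
  have "integral {1 .. real (Suc N)} (\<lambda>t. real_of_int \<lfloor>(real_of_int \<lfloor>t\<rfloor> + 1) / c\<rfloor> / t\<^sup>2)
          = (\<Sum>n<N. real_of_int \<lfloor>(real (Suc n) + 1) / c\<rfloor> / (real (Suc n) * (real (Suc n) + 1)))"
    using has_integral_floor_step_div_square_sum[of "\<lambda>k. real_of_int \<lfloor>(real_of_int k + 1) / c\<rfloor>" N]
    by (simp add: integral_unique)
  also have "\<dots> = (\<Sum>n<N. inverse (real (Suc n)) / c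
                      - frac ((real (Suc n) + 1) / c) / (real (Suc n) * (real (Suc n) + 1)))"
    by (intro sum.cong refl floor_ratio_div_consecutive_product[OF assms]) simp
  also have "\<dots> = harm N / c - (\<Sum>n<N. frac ((real (Suc n) + 1) / c) / (real (Suc n) * (real (Suc n) + 1)))"
    by (simp only: sum_subtractf sum_divide_distrib harm_altdef)
  finally show ?thesis .
qed

lemma
  fixes x :: real
  assumes "x \<ge> 1"
  shows ln_minus_ln_floor_nonneg: "0 \<le> ln x - ln \<lfloor>x\<rfloor>"
    and ln_minus_ln_floor_le: "ln x - ln \<lfloor>x\<rfloor> \<le> 1 / \<lfloor>x\<rfloor>"
proof -
  have floor_pos: "real_of_int \<lfloor>x\<rfloor> > 0" and floor_le: "real_of_int \<lfloor>x\<rfloor> \<le> x"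
    using assms by linarith+
  then show "0 \<le> ln x - ln \<lfloor>x\<rfloor>"
    by simp
  have "ln x - ln \<lfloor>x\<rfloor> \<le> (x - \<lfloor>x\<rfloor>) / \<lfloor>x\<rfloor>"
    using floor_pos floor_le by (intro ln_diff_le) simp_all
  also have "\<dots> \<le> 1 / \<lfloor>x\<rfloor>"
    using floor_pos by (intro divide_right_mono) linarith+
  finally show "ln x - ln \<lfloor>x\<rfloor> \<le> 1 / \<lfloor>x\<rfloor>" .
qed

lemma integral_floor_ratio_div_square_minus_main_term:
  fixes c y :: real
  assumes "c \<noteq> 0"
  defines "b \<equiv> \<lambda>n. frac ((real (Suc n) + 1) / c) / (real (Suc n) * (real (Suc n) + 1))"
  shows "integral {1 .. real (Suc N)} (\<lambda>t. real_of_int \<lfloor>(real_of_int \<lfloor>t\<rfloor> + 1) / c\<rfloor> / t\<^sup>2)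
           - ((1 / c) * (ln y + euler_mascheroni) - (\<Sum>n. b n))
         = inverse c * (harm N - ln (real (Suc N)) - euler_mascheroni)
           - inverse c * (ln y - ln (real (Suc N))) + (\<Sum>n. b (n + N))"
proof -
  have "summable b"
    unfolding b_def by (intro summable_bounded_div_consecutive_product frac_ge_0 less_imp_le[OF frac_lt_1])
  then have "(\<Sum>n. b n) = (\<Sum>n. b (n + N)) + (\<Sum>n<N. b n)"
    by (rule suminf_split_initial_segment)
  then show ?thesis
    unfolding integral_floor_ratio_div_square[OF assms(1)] b_def
    by (simp add: algebra_simps inverse_eq_divide)
qed

lemma integral_floor_ratio_div_square_error_le:
  fixes c :: real and m :: nat
  assumes "c > 1" and "m \<ge> 1" and "real m + 1 \<le> c * real m"
  shows "\<bar>integral {1 .. real_of_int \<lfloor>c * real m\<rfloor>}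
              (\<lambda>t. real_of_int \<lfloor>(real_of_int \<lfloor>t\<rfloor> + 1) / c\<rfloor> / t\<^sup>2)
          - ((1 / c) * (ln (real m) + ln c + euler_mascheroni)
             - (\<Sum>n. frac ((real (Suc n) + 1) / c) / (real (Suc n) * (real (Suc n) + 1))))\<bar>
         \<le> 3 / real m"
proof -
  define N where "N = nat \<lfloor>c * real m\<rfloor> - 1"
  define T where "T = (\<Sum>n. frac ((real (Suc (n + N)) + 1) / c) / (real (Suc (n + N)) * (real (Suc (n + N)) + 1)))"
  have floor_eq: "real_of_int \<lfloor>c * real m\<rfloor> = real (Suc N)" and "m \<le> N"
    using assms unfolding N_def by linarith+
  have "1 / (2 * real N) \<le> 1 / real m" and "1 / real (Suc N) \<le> 1 / real m"
    using \<open>m \<le> N\<close> assms(2) by (simp_all add: frac_le)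
  moreover have "\<bar>harm N - ln (real (Suc N)) - euler_mascheroni\<bar> \<le> 1 / (2 * real N)"
    using \<open>m \<le> N\<close> assms(2) by (intro abs_harm_minus_ln_minus_euler_mascheroni_le) simp
  moreover have "\<bar>ln (c * real m) - ln (real (Suc N))\<bar> \<le> 1 / real (Suc N)"
    using ln_minus_ln_floor_nonneg[of "c * real m"] ln_minus_ln_floor_le[of "c * real m"] assms
    unfolding floor_eq by simp
  moreover have "\<bar>T\<bar> \<le> 1 / real (Suc N)"
    using suminf_bounded_div_consecutive_product_tail_nonneg[of "\<lambda>n. frac ((real (Suc n) + 1) / c)" N]
      suminf_bounded_div_consecutive_product_tail_le[of "\<lambda>n. frac ((real (Suc n) + 1) / c)" N]
    unfolding T_def by (simp add: less_imp_le[OF frac_lt_1])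
  ultimately have bounds: "\<bar>harm N - ln (real (Suc N)) - euler_mascheroni\<bar> \<le> 1 / real m"
    "\<bar>ln (c * real m) - ln (real (Suc N))\<bar> \<le> 1 / real m" "\<bar>T\<bar> \<le> 1 / real m"
    by linarith+
  have scaled: "\<bar>inverse c * x\<bar> \<le> \<bar>x\<bar>" for x
    using assms(1) by (simp add: abs_mult mult_left_le_one_le inverse_le_1_iff)
  have "ln (real m) + ln c = ln (c * real m)"
    using assms by (simp add: ln_mult)
  then have "integral {1 .. real_of_int \<lfloor>c * real m\<rfloor>} (\<lambda>t. real_of_int \<lfloor>(real_of_int \<lfloor>t\<rfloor> + 1) / c\<rfloor> / t\<^sup>2)
          - ((1 / c) * (ln (real m) + ln c + euler_mascheroni)
             - (\<Sum>n. frac ((real (Suc n) + 1) / c) / (real (Suc n) * (real (Suc n) + 1))))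
      = inverse c * (harm N - ln (real (Suc N)) - euler_mascheroni)
          - inverse c * (ln (c * real m) - ln (real (Suc N))) + T"
    using integral_floor_ratio_div_square_minus_main_term[of c N "c * real m"] assms(1)
    unfolding floor_eq T_def by simp
  also have "\<bar>\<dots>\<bar> \<le> \<bar>inverse c * (harm N - ln (real (Suc N)) - euler_mascheroni)\<bar>
          + \<bar>inverse c * (ln (c * real m) - ln (real (Suc N)))\<bar> + \<bar>T\<bar>"
    by (smt (verit) abs_triangle_ineq abs_triangle_ineq4)
  also have "\<dots> \<le> 3 / real m"
    using scaled[of "harm N - ln (real (Suc N)) - euler_mascheroni"]
      scaled[of "ln (c * real m) - ln (real (Suc N))"] bounds by simp
  finally show ?thesis .
qed

theorem lemma9:
  fixes c :: real
  assumes "c > 1" and "c \<notin> \<rat>"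
  shows "(\<lambda>m::nat.
            integral {1 .. real_of_int \<lfloor>c * real m\<rfloor>}
              (\<lambda>t. real_of_int \<lfloor>(real_of_int \<lfloor>t\<rfloor> + 1) / c\<rfloor> / t\<^sup>2)
          - ((1 / c) * (ln (real m) + ln c + euler_mascheroni)
             - (\<Sum>n. frac ((real (Suc n) + 1) / c) / (real (Suc n) * (real (Suc n) + 1)))))
         \<in> O(\<lambda>m. 1 / real m)"
proof (rule bigoI[where c = 3])
  obtain M :: nat where "1 / (c - 1) \<le> real M"
    using real_arch_simple by blast
  then have "1 \<le> (c - 1) * real M"
    using assms(1) by (simp add: field_simps)
  then have "real m + 1 \<le> c * real m" if "m \<ge> M" for m
    using mult_left_mono[of "real M" "real m" "c - 1"] assms(1) that by (simp add: algebra_simps)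
  then have "eventually (\<lambda>m. m \<ge> 1 \<and> real m + 1 \<le> c * real m) at_top"
    by (intro eventually_conj eventually_ge_at_top eventually_mono[OF eventually_ge_at_top[of M]])
  then show "eventually (\<lambda>m. norm (integral {1 .. real_of_int \<lfloor>c * real m\<rfloor>}
              (\<lambda>t. real_of_int \<lfloor>(real_of_int \<lfloor>t\<rfloor> + 1) / c\<rfloor> / t\<^sup>2)
          - ((1 / c) * (ln (real m) + ln c + euler_mascheroni)
             - (\<Sum>n. frac ((real (Suc n) + 1) / c) / (real (Suc n) * (real (Suc n) + 1)))))
         \<le> 3 * norm (1 / real m)) at_top"
    by (rule eventually_mono)
      (use integral_floor_ratio_div_square_error_le[OF assms(1)] in auto)
qed

end
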